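(* Let $T'$ and $T''$ be canonical subtrees (with respect to a weighted rooted tree $T$ and an integer $k\ge 4$) such that $T''$ is one of the connected components of the forest obtained from $T'$ by deleting the vertices of $C_{T'}$. Let $v$ be a vertex of $T''$. Let $X$ be the set of vertices in $C_{T'}$ that are ancestors of $v$ in $T$, let $x$ be the element of $X$ that is deepest in $T$, and let $x'$ be the child of $x$ that is an ancestor of $v$. Then $x'=rt(T'')$.
   Context: Let $T$ be a rooted tree on $n$ vertices with positive edge weights. Ancestor/descendant refer to $T$, and a vertex counts as its own ancestor and descendant. $T_v$ denotes the subtree of $T$ rooted at $v$. For every non-leaf vertex $v$ of $T$ fix a child $c_1(v)$ with $|T_{c_1(v)}|$ maximal among the children of $v$; the edges $(v,c_1(v))$ are called leftmost. A subtree $R$ of $T$ (connected subgraph) is rooted at its vertex closest to the root of $T$, denoted $rt(R)$, and inherits the leftmost labelling; $R_v$ is the subtree of $R$ rooted at $v$. For $v\in V(R)$, $P_R(v)$ is the longest downward path from $v$ in $R$ using only leftmost edges; its last vertex is $l(v)$, and $l(R):=l(rt(R))$. For an integer $d$, a vertex $v$ of $R$ is $d$-balanced (in $R$) if $|R_{c_1(v)}|\le |R|-d$ (where $|R_{c_1(v)}|=0$ if $c_1(v)$ is undefined or not in $R$). $b_d(v)$ is the first $d$-balanced vertex on $P_R(v)$, or NULL if none. Define $CV(R,d)=\emptyset$ if $b_d(rt(R))$ is NULL, and otherwise, with $b=b_d(rt(R))$, $CV(R,d)=\{b\}\cup\bigcup_{w}CV(R_w,d)$, the union over the children $w$ of $b$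 in $R$. Fix an integer $k\ge 4$. For a subtree $R$ with $m$ vertices, $C_R:=V(R)$ if $k\ge m/2-1$, and otherwise $C_R:=CV(R,m/k)\cup\{l(R),rt(R)\}$. Canonical subtrees: $T$ is canonical; if $R$ is canonical, every connected component of the forest obtained from $R$ by deleting the vertices of $C_R$ (and incident edges) is canonical. *)

theory Defs
  imports Complex_Main
begin

definition anc :: "'a set \<Rightarrow> 'a \<Rightarrow> ('a \<Rightarrow> 'a) \<Rightarrow> 'a \<Rightarrow> 'a \<Rightarrow> bool" where
  "anc V r par u v \<longleftrightarrow> u \<in> V \<and> v \<in> V \<and>
     (\<exists>n. (par ^^ n) v = u \<and> (\<forall>i<n. (par ^^ i) v \<noteq> r))"

definition is_child :: "'a set \<Rightarrow> 'a \<Rightarrow> ('a \<Rightarrow> 'a) \<Rightarrow> 'a \<Rightarrow> 'a \<Rightarrow> bool" where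
  "is_child V r par w v \<longleftrightarrow> w \<in> V \<and> w \<noteq> r \<and> par w = v"

definition rooted_tree :: "'a set \<Rightarrow> 'a \<Rightarrow> ('a \<Rightarrow> 'a) \<Rightarrow> bool" where
  "rooted_tree V r par \<longleftrightarrow> finite V \<and> r \<in> V \<and> (\<forall>v\<in>V - {r}. par v \<in> V)
     \<and> (\<forall>v\<in>V. anc V r par r v)"

definition subT :: "'a set \<Rightarrow> 'a \<Rightarrow> ('a \<Rightarrow> 'a) \<Rightarrow> 'a \<Rightarrow> 'a set" where
  "subT V r par u = {x. anc V r par u x}"

text \<open>c1 is a valid choice of leftmost (heaviest) children; its value on leaves is irrelevant.\<close>
definition leftmost_choice :: "'a set \<Rightarrow> 'a \<Rightarrow> ('a \<Rightarrow> 'a) \<Rightarrow> ('a \<Rightarrow> 'a) \<Rightarrow> bool" where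
  "leftmost_choice V r par c1 \<longleftrightarrow> (\<forall>v\<in>V. (\<exists>w. is_child V r par w v) \<longrightarrow>
      is_child V r par (c1 v) v \<and>
      (\<forall>w. is_child V r par w v \<longrightarrow> card (subT V r par w) \<le> card (subT V r par (c1 v))))"

definition subtree :: "'a set \<Rightarrow> 'a \<Rightarrow> ('a \<Rightarrow> 'a) \<Rightarrow> 'a set \<Rightarrow> bool" where
  "subtree V r par S \<longleftrightarrow> S \<subseteq> V \<and> (\<exists>\<rho>\<in>S. \<forall>u\<in>S. anc V r par \<rho> u \<and>
      (\<forall>w. anc V r par \<rho> w \<and> anc V r par w u \<longrightarrow> w \<in> S))"

definition rt :: "'a set \<Rightarrow> 'a \<Rightarrow> ('a \<Rightarrow> 'a) \<Rightarrow> 'a set \<Rightarrow> 'a" where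
  "rt V r par S = (THE \<rho>. \<rho> \<in> S \<and> (\<forall>u\<in>S. anc V r par \<rho> u))"

definition sub :: "'a set \<Rightarrow> 'a \<Rightarrow> ('a \<Rightarrow> 'a) \<Rightarrow> 'a set \<Rightarrow> 'a \<Rightarrow> 'a set" where
  "sub V r par S v = {u \<in> S. anc V r par v u}"

definition haslc :: "'a set \<Rightarrow> 'a \<Rightarrow> ('a \<Rightarrow> 'a) \<Rightarrow> ('a \<Rightarrow> 'a) \<Rightarrow> 'a set \<Rightarrow> 'a \<Rightarrow> bool" where
  "haslc V r par c1 S v \<longleftrightarrow> (\<exists>w. is_child V r par w v) \<and> c1 v \<in> S"

text \<open>length of the leftmost path P_R(v); its vertices are (c1^^i) v, i \<le> lplen\<close>
definition lplen :: "'a set \<Rightarrow> 'a \<Rightarrow> ('a \<Rightarrow> 'a) \<Rightarrow> ('a \<Rightarrow> 'a) \<Rightarrow> 'a set \<Rightarrow> 'a \<Rightarrow> nat" where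
  "lplen V r par c1 S v = (LEAST n. \<not> haslc V r par c1 S ((c1 ^^ n) v))"

definition lend :: "'a set \<Rightarrow> 'a \<Rightarrow> ('a \<Rightarrow> 'a) \<Rightarrow> ('a \<Rightarrow> 'a) \<Rightarrow> 'a set \<Rightarrow> 'a \<Rightarrow> 'a" where
  "lend V r par c1 S v = (c1 ^^ lplen V r par c1 S v) v"

text \<open>d-balanced (d real, since it is instantiated with m/k)\<close>
definition balanced :: "'a set \<Rightarrow> 'a \<Rightarrow> ('a \<Rightarrow> 'a) \<Rightarrow> ('a \<Rightarrow> 'a) \<Rightarrow> 'a set \<Rightarrow> real \<Rightarrow> 'a \<Rightarrow> bool" where
  "balanced V r par c1 S d v \<longleftrightarrow> v \<in> S \<and>
     real (if haslc V r par c1 S v then card (sub V r par S (c1 v)) else 0) \<le> real (card S) - d"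

text \<open>b_d(v): first d-balanced vertex on P_R(v), None = NULL\<close>
definition bd :: "'a set \<Rightarrow> 'a \<Rightarrow> ('a \<Rightarrow> 'a) \<Rightarrow> ('a \<Rightarrow> 'a) \<Rightarrow> 'a set \<Rightarrow> real \<Rightarrow> 'a \<Rightarrow> 'a option" where
  "bd V r par c1 S d v =
    (if \<exists>i \<le> lplen V r par c1 S v. balanced V r par c1 S d ((c1 ^^ i) v)
     then Some ((c1 ^^ (LEAST i. balanced V r par c1 S d ((c1 ^^ i) v))) v)
     else None)"

text \<open>Membership in CV(R,d), as the least solution of the recursive definition.\<close>
inductive in_CV :: "'a set \<Rightarrow> 'a \<Rightarrow> ('a \<Rightarrow> 'a) \<Rightarrow> ('a \<Rightarrow> 'a) \<Rightarrow> 'a set \<Rightarrow> real \<Rightarrow> 'a \<Rightarrow> bool"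
  for V r par c1 where
  here: "bd V r par c1 S d (rt V r par S) = Some b \<Longrightarrow> in_CV V r par c1 S d b"
| below: "bd V r par c1 S d (rt V r par S) = Some b \<Longrightarrow> is_child V r par w b \<Longrightarrow> w \<in> S \<Longrightarrow>
     in_CV V r par c1 (sub V r par S w) d x \<Longrightarrow> in_CV V r par c1 S d x"

definition CV :: "'a set \<Rightarrow> 'a \<Rightarrow> ('a \<Rightarrow> 'a) \<Rightarrow> ('a \<Rightarrow> 'a) \<Rightarrow> 'a set \<Rightarrow> real \<Rightarrow> 'a set" where
  "CV V r par c1 S d = {x. in_CV V r par c1 S d x}"

definition CR :: "'a set \<Rightarrow> 'a \<Rightarrow> ('a \<Rightarrow> 'a) \<Rightarrow> ('a \<Rightarrow> 'a) \<Rightarrow> nat \<Rightarrow> 'a set \<Rightarrow> 'a set" where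
  "CR V r par c1 k S =
    (if real k \<ge> real (card S) / 2 - 1 then S
     else CV V r par c1 S (real (card S) / real k)
          \<union> {lend V r par c1 S (rt V r par S), rt V r par S})"

definition comps :: "'a set \<Rightarrow> 'a \<Rightarrow> ('a \<Rightarrow> 'a) \<Rightarrow> 'a set \<Rightarrow> 'a set \<Rightarrow> 'a set set" where
  "comps V r par S C = {Q. Q \<noteq> {} \<and> subtree V r par Q \<and> Q \<subseteq> S - C \<and>
     (\<forall>Q'. subtree V r par Q' \<and> Q' \<subseteq> S - C \<and> Q \<subseteq> Q' \<longrightarrow> Q' = Q)}"

inductive canonical :: "'a set \<Rightarrow> 'a \<Rightarrow> ('a \<Rightarrow> 'a) \<Rightarrow> ('a \<Rightarrow> 'a) \<Rightarrow> nat \<Rightarrow> 'a set \<Rightarrow> bool"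
  for V r par c1 k where
  top: "canonical V r par c1 k V"
| step: "canonical V r par c1 k R \<Longrightarrow> Q \<in> comps V r par R (CR V r par c1 k R) \<Longrightarrow>
     canonical V r par c1 k Q"

end

theory Submission
  imports Defs
begin

text \<open>The root \<rho> of T'' lies on the path from x' down to v: otherwise \<rho> would be a proper
  ancestor of x' and hence of x, and convexity of T'' would put x \<in> C_{T'} into T''.
  The path from x' to v stays inside T' (T' is convex and rt(T') \<in> C_{T'} lies above x) and
  avoids C_{T'} (x is the deepest vertex of C_{T'} above v), so T'' together with this path is a
  subtree of T' - C_{T'}. Maximality of the component T'' forces x' \<in> T'', hence x' = \<rho>.\<close>

lemma funpow_avoid_append:
  assumes "\<forall>i<n. (f ^^ i) b \<noteq> r" and "\<forall>i<m. (f ^^ i) ((f ^^ n) b) \<noteq> r"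
  shows "\<forall>i<n + m. (f ^^ i) b \<noteq> r"
proof (intro allI impI)
  fix i assume i: "i < n + m"
  show "(f ^^ i) b \<noteq> r"
  proof (cases "i < n")
    case True
    then show ?thesis using assms(1) by blast
  next
    case False
    then have "i = (i - n) + n"
      by simp
    then have "(f ^^ i) b = (f ^^ (i - n)) ((f ^^ n) b)"
      by (metis comp_apply funpow_add)
    then show ?thesis using assms(2) False i by simp
  qed
qed

locale parent_map =
  fixes V :: "'a set" and r :: 'a and par :: "'a \<Rightarrow> 'a"
begin

abbreviation ancestor :: "'a \<Rightarrow> 'a \<Rightarrow> bool" (infix "\<preceq>" 50) where
  "u \<preceq> w \<equiv> anc V r par u w"

lemma anc_in_V: "u \<preceq> w \<Longrightarrow> u \<in> V \<and> w \<in> V"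
  by (simp add: anc_def)

lemma anc_refl: "u \<in> V \<Longrightarrow> u \<preceq> u"
  unfolding anc_def by (intro conjI exI[of _ 0]) auto

lemma anc_trans:
  assumes "u \<preceq> w" and "w \<preceq> z"
  shows "u \<preceq> z"
proof -
  obtain n where n: "(par ^^ n) w = u" "\<forall>i<n. (par ^^ i) w \<noteq> r"
    using assms(1) unfolding anc_def by blast
  obtain m where m: "(par ^^ m) z = w" "\<forall>i<m. (par ^^ i) z \<noteq> r"
    using assms(2) unfolding anc_def by blast
  have "(par ^^ (n + m)) z = u"
    using n(1) m(1) by (simp add: funpow_add)
  moreover have "\<forall>i<m + n. (par ^^ i) z \<noteq> r"
    using funpow_avoid_append[OF m(2)] n(2) m(1) by simp
  moreover have "u \<in> V" "z \<in> V"
    using assms anc_in_V by blast+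
  ultimately show ?thesis
    unfolding anc_def by (metis add.commute)
qed

lemma anc_funpow_le:
  assumes "n \<le> m" and "(par ^^ n) z = u" and "(par ^^ m) z = w" and "\<forall>i<m. (par ^^ i) z \<noteq> r"
    and "u \<in> V" and "w \<in> V"
  shows "w \<preceq> u"
proof -
  have "(par ^^ (m - n)) u = w"
    using assms(1-3) by (metis comp_apply funpow_add le_add_diff_inverse2)
  moreover have "(par ^^ i) u \<noteq> r" if "i < m - n" for i
    using assms(2,4) that by (metis comp_apply funpow_add less_diff_conv)
  ultimately show ?thesis
    unfolding anc_def using assms(5,6) by blast
qed

lemma anc_linear:
  assumes "u \<preceq> z" and "w \<preceq> z"
  shows "u \<preceq> w \<or> w \<preceq> u"
proof -
  obtain n where n: "(par ^^ n) z = u" "\<forall>i<n. (par ^^ i) z \<noteq> r"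
    using assms(1) unfolding anc_def by blast
  obtain m where m: "(par ^^ m) z = w" "\<forall>i<m. (par ^^ i) z \<noteq> r"
    using assms(2) unfolding anc_def by blast
  have "u \<in> V" "w \<in> V"
    using assms anc_in_V by blast+
  then show ?thesis
    using anc_funpow_le[OF _ n(1) m] anc_funpow_le[OF _ m(1) n] by (meson nat_le_linear)
qed

lemma subtree_convex:
  assumes "subtree V r par S" and "a \<in> S" and "u \<in> S" and "a \<preceq> w" and "w \<preceq> u"
  shows "w \<in> S"
  using assms unfolding subtree_def by (meson anc_trans)

end

locale rooted_parent_tree = parent_map +
  assumes tree: "rooted_tree V r par"
begin

lemma no_cycle_avoiding_root:
  assumes "b \<in> V" and "0 < p" and "(par ^^ p) b = b" and "\<forall>i<p. (par ^^ i) b \<noteq> r"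
  shows False
proof -
  obtain k where "(par ^^ k) b = r"
    using tree assms(1) unfolding rooted_tree_def anc_def by blast
  then have "(par ^^ (k mod p)) b = r"
    using funpow_mod_eq[OF assms(3)] by simp
  then show False
    using assms(2,4) by simp
qed

lemma anc_antisym:
  assumes "u \<preceq> w" and "w \<preceq> u"
  shows "u = w"
proof (rule ccontr)
  assume "u \<noteq> w"
  from assms(1) obtain n where n: "(par ^^ n) w = u" "\<forall>i<n. (par ^^ i) w \<noteq> r"
    unfolding anc_def by blast
  from assms(2) obtain m where m: "(par ^^ m) u = w" "\<forall>i<m. (par ^^ i) u \<noteq> r"
    unfolding anc_def by blast
  have "w \<in> V"
    using anc_in_V[OF assms(1)] by simp
  moreover have "0 < n + m"
    using \<open>u \<noteq> w\<close> n(1) by (cases n) auto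
  moreover have "(par ^^ (m + n)) w = (par ^^ m) ((par ^^ n) w)"
    by (simp add: funpow_add)
  then have "(par ^^ (n + m)) w = w"
    by (simp only: n(1) m(1) add.commute)
  moreover have "\<forall>i<n + m. (par ^^ i) w \<noteq> r"
    using funpow_avoid_append[OF n(2)] m(2) unfolding n(1) .
  ultimately show False
    by (rule no_cycle_avoiding_root)
qed

lemma parent_anc_child:
  assumes "is_child V r par w u"
  shows "u \<preceq> w"
proof -
  have "w \<in> V" "w \<noteq> r" "par w = u"
    using assms unfolding is_child_def by auto
  moreover have "u \<in> V"
    using tree calculation unfolding rooted_tree_def by auto
  ultimately show ?thesis
    unfolding anc_def by (intro conjI exI[of _ 1]) auto
qed

lemma child_not_anc_parent:
  assumes "is_child V r par w u"
  shows "\<not> w \<preceq> u"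
proof
  assume "w \<preceq> u"
  then have "w = u"
    using anc_antisym parent_anc_child[OF assms] by blast
  moreover have "w \<in> V" "w \<noteq> r" "par w = u"
    using assms unfolding is_child_def by auto
  ultimately show False
    using no_cycle_avoiding_root[of w 1] by simp
qed

lemma anc_parent_if_anc_child:
  assumes "is_child V r par w u" and "a \<preceq> w" and "a \<noteq> w"
  shows "a \<preceq> u"
proof -
  obtain n where n: "(par ^^ n) w = a" "\<forall>i<n. (par ^^ i) w \<noteq> r"
    using assms(2) unfolding anc_def by blast
  have "1 \<le> n"
    using assms(3) n(1) by (cases n) auto
  moreover have "(par ^^ 1) w = u"
    using assms(1) unfolding is_child_def by simp
  moreover have "a \<in> V" "u \<in> V"
    using assms(2) parent_anc_child[OF assms(1)] anc_in_V by blast+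
  ultimately show ?thesis
    using anc_funpow_le[of 1 n w u a] n by simp
qed

lemma rt_eqI:
  assumes "\<rho> \<in> S" and "\<forall>u\<in>S. \<rho> \<preceq> u"
  shows "rt V r par S = \<rho>"
  unfolding rt_def by (rule the_equality) (use assms in \<open>auto intro: anc_antisym\<close>)

lemma subtree_rt:
  assumes "subtree V r par S"
  shows "rt V r par S \<in> S" and "u \<in> S \<Longrightarrow> rt V r par S \<preceq> u"
proof -
  obtain \<rho> where "\<rho> \<in> S" "\<forall>u\<in>S. \<rho> \<preceq> u"
    using assms unfolding subtree_def by blast
  with rt_eqI show "rt V r par S \<in> S" and "u \<in> S \<Longrightarrow> rt V r par S \<preceq> u"
    by auto
qed

lemma subtree_Un_path:
  assumes Q: "subtree V r par Q" and v: "v \<in> Q" and a: "a \<preceq> rt V r par Q"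
  shows "subtree V r par (Q \<union> {w. a \<preceq> w \<and> w \<preceq> v})" (is "subtree V r par ?Q'")
proof -
  have root: "a \<preceq> u" if "u \<in> ?Q'" for u
    using that a subtree_rt(2)[OF Q] anc_trans by blast
  have closed: "w \<in> ?Q'" if "u \<in> ?Q'" "a \<preceq> w" "w \<preceq> u" for u w
  proof (cases "u \<in> Q")
    case True
    then have "rt V r par Q \<preceq> w \<or> w \<preceq> rt V r par Q"
      using anc_linear[OF subtree_rt(2)[OF Q] that(3)] by simp
    moreover have "w \<in> Q" if "rt V r par Q \<preceq> w"
      using subtree_convex[OF Q subtree_rt(1)[OF Q] \<open>u \<in> Q\<close> that \<open>w \<preceq> u\<close>] .
    moreover have "w \<preceq> v" if "w \<preceq> rt V r par Q"
      using anc_trans[OF that subtree_rt(2)[OF Q v]] .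
    ultimately show ?thesis
      using that(2) by blast
  next
    case False
    then show ?thesis
      using that anc_trans by blast
  qed
  have "?Q' \<subseteq> V"
    using Q root anc_in_V unfolding subtree_def by blast
  moreover have "a \<in> ?Q'"
    using a anc_in_V anc_refl anc_trans subtree_rt(2)[OF Q v] by blast
  ultimately show ?thesis
    unfolding subtree_def using root closed by blast
qed

lemma canonical_subtree: "canonical V r par c1 k S \<Longrightarrow> subtree V r par S"
proof (induction rule: canonical.induct)
  case top
  show ?case
    using tree unfolding subtree_def rooted_tree_def by (auto simp: anc_def)
next
  case (step R Q)
  then show ?case
    unfolding comps_def by blast
qed

lemma rt_in_CR: "subtree V r par S \<Longrightarrow> rt V r par S \<in> CR V r par c1 k S"
  using subtree_rt(1) unfolding CR_def by auto

lemma child_of_removed_anc_rt_component: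
  assumes Q: "Q \<in> comps V r par S C" and v: "v \<in> Q"
    and x: "x \<in> C" "x \<preceq> v" and x': "is_child V r par x' x" "x' \<preceq> v"
  shows "x' \<preceq> rt V r par Q"
proof -
  have Q_sub: "subtree V r par Q" and "x \<notin> Q"
    using Q x(1) unfolding comps_def by blast+
  have "rt V r par Q \<preceq> v"
    using subtree_rt(2)[OF Q_sub v] .
  moreover have "\<not> rt V r par Q \<preceq> x"
    using subtree_convex[OF Q_sub subtree_rt(1)[OF Q_sub] v _ x(2)] \<open>x \<notin> Q\<close> by blast
  ultimately show ?thesis
    using anc_linear[OF x'(2)] anc_parent_if_anc_child[OF x'(1)] by blast
qed

lemma rt_component_eq_child_of_deepest:
  assumes S: "subtree V r par S" and Q: "Q \<in> comps V r par S C" and v: "v \<in> Q"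
    and x: "x \<in> C" "x \<in> S" "x \<preceq> v" and deepest: "\<forall>y\<in>C. y \<preceq> v \<longrightarrow> y \<preceq> x"
    and x': "is_child V r par x' x" "x' \<preceq> v"
  shows "rt V r par Q = x'"
proof -
  define P where "P = {w. x' \<preceq> w \<and> w \<preceq> v}"
  have Q_sub: "subtree V r par Q" and Q_SC: "Q \<subseteq> S - C"
    and Q_max: "\<And>Q'. subtree V r par Q' \<Longrightarrow> Q' \<subseteq> S - C \<Longrightarrow> Q \<subseteq> Q' \<Longrightarrow> Q' = Q"
    using Q unfolding comps_def by blast+
  have x'_rt: "x' \<preceq> rt V r par Q"
    using child_of_removed_anc_rt_component[OF Q v x(1,3) x'] .
  have "P \<subseteq> S"
    using subtree_convex[OF S x(2)] Q_SC v anc_trans[OF parent_anc_child[OF x'(1)]]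
    unfolding P_def by blast
  moreover have "P \<inter> C = {}"
    using deepest child_not_anc_parent[OF x'(1)] anc_trans unfolding P_def by blast
  ultimately have "Q \<union> P = Q"
    using Q_max subtree_Un_path[OF Q_sub v x'_rt] Q_SC unfolding P_def by blast
  moreover have "x' \<in> P"
    using x'(2) anc_in_V anc_refl unfolding P_def by blast
  ultimately have "x' \<in> Q"
    by blast
  then show ?thesis
    using anc_antisym[OF x'_rt subtree_rt(2)[OF Q_sub]] by simp
qed

end

theorem lemma4:
  fixes V :: "'a set" and r :: 'a and par c1 :: "'a \<Rightarrow> 'a" and k :: nat
    and T' T'' :: "'a set" and v x x' :: 'a
  assumes tree: "rooted_tree V r par"
    and lc: "leftmost_choice V r par c1"
    and k: "k \<ge> 4"
    and can': "canonical V r par c1 k T'"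
    and can'': "canonical V r par c1 k T''"
    and comp: "T'' \<in> comps V r par T' (CR V r par c1 k T')"
    and v: "v \<in> T''"
    and xX: "x \<in> CR V r par c1 k T' \<and> anc V r par x v"
    and xdeep: "\<forall>y \<in> CR V r par c1 k T'. anc V r par y v \<longrightarrow> anc V r par y x"
    and x': "is_child V r par x' x" and x'v: "anc V r par x' v"
  shows "x' = rt V r par T''"
proof -
  interpret rooted_parent_tree V r par
    using tree by unfold_locales
  have T': "subtree V r par T'"
    using canonical_subtree[OF can'] .
  have "v \<in> T'"
    using comp v unfolding comps_def by blast
  then have "rt V r par T' \<preceq> x"
    using xdeep rt_in_CR[OF T'] subtree_rt(2)[OF T'] by blast
  then have "x \<in> T'"
    using subtree_convex[OF T' subtree_rt(1)[OF T'] \<open>v \<in> T'\<close>] xX by blast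
  then show ?thesis
    using rt_component_eq_child_of_deepest[OF T' comp v _ _ _ xdeep x' x'v] xX by simp
qed


end
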